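(* For every instance $(d,\mathcal{C},k)$ of $k$-center and every execution of the reverse greedy algorithm on it (with any tie-breaking), the returned set $F_{n-k}$ satisfies $\mathrm{cost}(F_{n-k})\le 2k\cdot\mathrm{OPT}$; i.e., reverse greedy is a $2k$-approximation for $k$-center.
   Context: An instance of $k$-center consists of a finite metric space $(d,\mathcal{C})$ with $|\mathcal{C}|=n$ and an integer $k\ge 1$ with $k\le n$; every point is both a client and a potential facility. For nonempty $F\subseteq\mathcal{C}$, $d(c,F):=\min_{f\in F}d(c,f)$ and $\mathrm{cost}(F):=\max_{c\in\mathcal{C}}d(c,F)$; $\mathrm{OPT}$ is the minimum of $\mathrm{cost}(F)$ over $F\subseteq\mathcal{C}$ with $|F|\le k$. Reverse greedy: $F_0:=\mathcal{C}$, and for $i=1,\dots,n-k$, $F_i:=F_{i-1}\setminus\{f_i\}$ where $f_i\in\arg\min_{f\in F_{i-1}}\mathrm{cost}(F_{i-1}\setminus\{f\})$, ties broken arbitrarily; output $F_{n-k}$. *)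

theory Defs
  imports Complex_Main
begin

definition metric_on :: "'a set \<Rightarrow> ('a \<Rightarrow> 'a \<Rightarrow> real) \<Rightarrow> bool" where
  "metric_on C d \<longleftrightarrow>
     (\<forall>x\<in>C. \<forall>y\<in>C. d x y \<ge> 0) \<and>
     (\<forall>x\<in>C. \<forall>y\<in>C. d x y = 0 \<longleftrightarrow> x = y) \<and>
     (\<forall>x\<in>C. \<forall>y\<in>C. d x y = d y x) \<and>
     (\<forall>x\<in>C. \<forall>y\<in>C. \<forall>z\<in>C. d x z \<le> d x y + d y z)"

definition dist_set :: "('a \<Rightarrow> 'a \<Rightarrow> real) \<Rightarrow> 'a \<Rightarrow> 'a set \<Rightarrow> real" where
  "dist_set d c F = Min ((\<lambda>f. d c f) ` F)"

definition kcost :: "'a set \<Rightarrow> ('a \<Rightarrow> 'a \<Rightarrow> real) \<Rightarrow> 'a set \<Rightarrow> real" where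
  "kcost C d F = Max ((\<lambda>c. dist_set d c F) ` C)"

definition kopt :: "'a set \<Rightarrow> ('a \<Rightarrow> 'a \<Rightarrow> real) \<Rightarrow> nat \<Rightarrow> real" where
  "kopt C d k = Min (kcost C d ` {F. F \<subseteq> C \<and> F \<noteq> {} \<and> card F \<le> k})"

definition reverse_greedy_run :: "'a set \<Rightarrow> ('a \<Rightarrow> 'a \<Rightarrow> real) \<Rightarrow> nat \<Rightarrow> (nat \<Rightarrow> 'a set) \<Rightarrow> bool" where
  "reverse_greedy_run C d k F \<longleftrightarrow>
     F 0 = C \<and>
     (\<forall>i\<in>{1..card C - k}. \<exists>f\<in>F (i - 1).
        F i = F (i - 1) - {f} \<and>
        (\<forall>g\<in>F (i - 1). kcost C d (F (i - 1) - {f}) \<le> kcost C d (F (i - 1) - {g})))"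

end

theory Submission
  imports Defs
begin

text \<open>
  Fix an optimal solution \<open>Opt\<close> of cost \<open>r\<close> and send every point \<open>c\<close> to a centre \<open>\<sigma> c \<in> Opt\<close>
  with \<open>d c (\<sigma> c) \<le> r\<close>. Moving the centres of any \<open>F\<close> along \<open>\<sigma>\<close> changes the cost of \<open>F\<close> by at
  most \<open>r\<close>. As long as \<open>|F| > k \<ge> |\<sigma> ` F|\<close>, two centres of \<open>F\<close> share their image, so deleting
  one of them costs at most \<open>cost(\<sigma> ` F) + r\<close>, and so does the greedy deletion. Hence the
  potential \<open>cost(\<sigma> ` F) + 2 r |\<sigma> ` F|\<close> never increases during the run: it either keeps
  \<open>\<sigma> ` F\<close> and its cost, or it loses at least one image point and gains at most \<open>2 r\<close> in cost.
  The potential starts at most at \<open>r + 2 r k\<close> and ends at least at \<open>cost(F\<^sub>n\<^sub>-\<^sub>k) - r + 2 r\<close>.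
\<close>

lemma dist_set_le:
  assumes "finite F" "f \<in> F"
  shows "dist_set d c F \<le> d c f"
  unfolding dist_set_def using assms by (intro Min_le) auto

lemma dist_set_attained:
  assumes "finite F" "F \<noteq> {}"
  obtains f where "f \<in> F" "dist_set d c F = d c f"
proof -
  have "Min ((\<lambda>f. d c f) ` F) \<in> (\<lambda>f. d c f) ` F" using assms by (intro Min_in) auto
  then show ?thesis using that unfolding dist_set_def by blast
qed

lemma dist_set_le_kcost:
  assumes "finite C" "c \<in> C"
  shows "dist_set d c F \<le> kcost C d F"
  unfolding kcost_def using assms by (intro Max_ge) auto

lemma kcost_leI:
  assumes "finite C" "C \<noteq> {}" "\<And>c. c \<in> C \<Longrightarrow> dist_set d c F \<le> x"
  shows "kcost C d F \<le> x"
  unfolding kcost_def using assms by (subst Max_le_iff) auto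

lemma kcost_le_kcost_add:
  assumes "finite C" "metric_on C d" "F \<subseteq> C" "F \<noteq> {}" "G \<subseteq> C"
    and near: "\<And>f. f \<in> F \<Longrightarrow> \<exists>g\<in>G. d f g \<le> r"
  shows "kcost C d G \<le> kcost C d F + r"
proof (rule kcost_leI)
  show "C \<noteq> {}" using assms(3,4) by blast
  fix c assume c: "c \<in> C"
  have fin: "finite F" "finite G" using assms(1,3,5) finite_subset by auto
  obtain f where f: "f \<in> F" "dist_set d c F = d c f"
    using dist_set_attained[OF fin(1) assms(4)] by blast
  obtain g where g: "g \<in> G" "d f g \<le> r" using near[OF f(1)] by blast
  have "dist_set d c G \<le> d c g" using dist_set_le[OF fin(2) g(1)] .
  also have "\<dots> \<le> d c f + d f g"
    using assms(2,3,5) c f(1) g(1) unfolding metric_on_def by blast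
  also have "d c f \<le> kcost C d F" using f(2) dist_set_le_kcost[OF assms(1) c] by metis
  finally show "dist_set d c G \<le> kcost C d F + r" using g(2) by simp
qed (use assms(1) in simp)

lemma kcost_image_le_kcost_add:
  assumes "finite C" "metric_on C d" "F \<subseteq> C" "F \<noteq> {}"
    and \<sigma>: "\<And>c. c \<in> C \<Longrightarrow> \<sigma> c \<in> C \<and> d c (\<sigma> c) \<le> r"
  shows "kcost C d (\<sigma> ` F) \<le> kcost C d F + r"
  using assms by (intro kcost_le_kcost_add) auto

lemma kcost_le_kcost_image_add:
  assumes "finite C" "metric_on C d" "F \<subseteq> C" "F \<noteq> {}"
    and \<sigma>: "\<And>c. c \<in> C \<Longrightarrow> \<sigma> c \<in> C \<and> d c (\<sigma> c) \<le> r"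
  shows "kcost C d F \<le> kcost C d (\<sigma> ` F) + r"
proof (rule kcost_le_kcost_add[OF assms(1,2)])
  fix x assume "x \<in> \<sigma> ` F"
  then obtain y where "y \<in> F" "x = \<sigma> y" by blast
  then show "\<exists>z\<in>F. d x z \<le> r"
    using \<sigma> assms(2,3) unfolding metric_on_def by (metis subsetD)
qed (use assms \<sigma> in auto)

lemma kcost_image_le:
  assumes "finite C" "C \<noteq> {}" "\<And>c. c \<in> C \<Longrightarrow> d c (\<sigma> c) \<le> r"
  shows "kcost C d (\<sigma> ` C) \<le> r"
proof (rule kcost_leI[OF assms(1,2)])
  fix c assume "c \<in> C"
  then show "dist_set d c (\<sigma> ` C) \<le> r"
    using dist_set_le[of "\<sigma> ` C" "\<sigma> c" d c] assms(1,3) by force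
qed

lemma kopt_attained:
  assumes "finite C" "C \<noteq> {}" "1 \<le> k"
  obtains Opt where "Opt \<subseteq> C" "Opt \<noteq> {}" "card Opt \<le> k" "kcost C d Opt = kopt C d k"
proof -
  let ?S = "{F. F \<subseteq> C \<and> F \<noteq> {} \<and> card F \<le> k}"
  have "finite ?S" using assms(1) by (rule rev_finite_subset[OF finite_Pow_iff[THEN iffD2]]) auto
  moreover obtain c where "c \<in> C" using assms(2) by blast
  then have "{c} \<in> ?S" using assms(3) by simp
  ultimately have "kopt C d k \<in> kcost C d ` ?S" unfolding kopt_def by (intro Min_in) auto
  then obtain Opt where "Opt \<in> ?S" "kcost C d Opt = kopt C d k" by force
  then show ?thesis by (intro that) auto
qed

lemma nearest_center_map:
  assumes "finite C" "Opt \<subseteq> C" "Opt \<noteq> {}"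
  obtains \<sigma> where "\<And>c. c \<in> C \<Longrightarrow> \<sigma> c \<in> Opt \<and> d c (\<sigma> c) \<le> kcost C d Opt"
proof -
  have "\<exists>z\<in>Opt. d c z \<le> kcost C d Opt" if "c \<in> C" for c
  proof -
    obtain z where "z \<in> Opt" "dist_set d c Opt = d c z"
      using dist_set_attained[of Opt] assms(1,2,3) finite_subset by blast
    then show ?thesis using dist_set_le_kcost[OF assms(1) that] by metis
  qed
  then obtain \<sigma> where "\<forall>c\<in>C. \<sigma> c \<in> Opt \<and> d c (\<sigma> c) \<le> kcost C d Opt" by metis
  then show ?thesis using that by blast
qed

lemma reverse_greedy_run_step:
  assumes "reverse_greedy_run C d k F" "i < card C - k"
  obtains f where "f \<in> F i" "F (Suc i) = F i - {f}"
    "\<And>g. g \<in> F i \<Longrightarrow> kcost C d (F i - {f}) \<le> kcost C d (F i - {g})"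
proof -
  have "\<forall>j\<in>{1..card C - k}. \<exists>f\<in>F (j - 1). F j = F (j - 1) - {f} \<and>
      (\<forall>g\<in>F (j - 1). kcost C d (F (j - 1) - {f}) \<le> kcost C d (F (j - 1) - {g}))"
    using assms(1) unfolding reverse_greedy_run_def by blast
  moreover have "Suc i \<in> {1..card C - k}" using assms(2) by simp
  ultimately have "\<exists>f\<in>F i. F (Suc i) = F i - {f} \<and>
      (\<forall>g\<in>F i. kcost C d (F i - {f}) \<le> kcost C d (F i - {g}))"
    by (metis diff_Suc_1)
  then show ?thesis using that by blast
qed

lemma reverse_greedy_run_subset_card:
  assumes "finite C" "reverse_greedy_run C d k F" "i \<le> card C - k"
  shows "F i \<subseteq> C \<and> card (F i) = card C - i"
  using assms(3)
proof (induction i)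
  case 0
  then show ?case using assms(2) unfolding reverse_greedy_run_def by simp
next
  case (Suc i)
  then have IH: "F i \<subseteq> C" "card (F i) = card C - i" and "i < card C - k" by simp_all
  then obtain f where "f \<in> F i" "F (Suc i) = F i - {f}"
    using reverse_greedy_run_step[OF assms(2)] by blast
  moreover have "finite (F i)" using IH(1) assms(1) finite_subset by blast
  ultimately show ?case using IH by auto
qed

text \<open>Pigeonhole: two centres of \<open>F\<close> share their image, and deleting one of them keeps \<open>\<sigma> ` F\<close>.\<close>

lemma greedy_removal_le_image_cost:
  assumes "finite C" "metric_on C d" "F \<subseteq> C"
    and \<sigma>: "\<And>c. c \<in> C \<Longrightarrow> \<sigma> c \<in> C \<and> d c (\<sigma> c) \<le> r"
    and collision: "card (\<sigma> ` F) < card F"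
    and greedy: "\<And>g. g \<in> F \<Longrightarrow> kcost C d (F - {f}) \<le> kcost C d (F - {g})"
  shows "kcost C d (F - {f}) \<le> kcost C d (\<sigma> ` F) + r"
proof -
  obtain g g' where g: "g \<in> F" "g' \<in> F" "g \<noteq> g'" "\<sigma> g = \<sigma> g'"
    using collision card_image unfolding inj_on_def by (metis less_irrefl)
  have image: "\<sigma> ` (F - {g}) = \<sigma> ` F" using g by blast
  have "kcost C d (F - {f}) \<le> kcost C d (F - {g})" using greedy[OF g(1)] .
  also have "\<dots> \<le> kcost C d (\<sigma> ` (F - {g})) + r"
    using assms(3) g(1,2,3) by (intro kcost_le_kcost_image_add[OF assms(1,2) _ _ \<sigma>]) auto
  finally show ?thesis unfolding image .
qed

lemma greedy_removal_potential_le: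
  assumes "finite C" "metric_on C d" "F \<subseteq> C" "F - {f} \<noteq> {}"
    and \<sigma>: "\<And>c. c \<in> C \<Longrightarrow> \<sigma> c \<in> C \<and> d c (\<sigma> c) \<le> r"
    and collision: "card (\<sigma> ` F) < card F"
    and greedy: "\<And>g. g \<in> F \<Longrightarrow> kcost C d (F - {f}) \<le> kcost C d (F - {g})"
  shows "kcost C d (\<sigma> ` (F - {f})) + 2 * r * card (\<sigma> ` (F - {f}))
    \<le> kcost C d (\<sigma> ` F) + 2 * r * card (\<sigma> ` F)"
proof (cases "\<sigma> ` (F - {f}) = \<sigma> ` F")
  case False
  obtain c where c: "c \<in> F - {f}" using assms(4) by blast
  then have "0 \<le> d c (\<sigma> c)" "d c (\<sigma> c) \<le> r"
    using \<sigma> assms(2,3) unfolding metric_on_def by blast+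
  then have "0 \<le> r" by linarith
  have "finite (\<sigma> ` F)" using assms(1,3) finite_subset by blast
  with False have "card (\<sigma> ` (F - {f})) + 1 \<le> card (\<sigma> ` F)"
    by (metis Diff_subset Suc_eq_plus1 Suc_leI image_mono psubsetI psubset_card_mono)
  then have "2 * r * (card (\<sigma> ` (F - {f})) + 1) \<le> 2 * r * card (\<sigma> ` F)"
    using \<open>0 \<le> r\<close> by (intro mult_left_mono) simp_all
  moreover have "kcost C d (\<sigma> ` (F - {f})) \<le> kcost C d (F - {f}) + r"
    using assms(3,4) by (intro kcost_image_le_kcost_add[OF assms(1,2) _ _ \<sigma>]) auto
  moreover have "kcost C d (F - {f}) \<le> kcost C d (\<sigma> ` F) + r"
    using greedy_removal_le_image_cost[OF assms(1-3) \<sigma> collision greedy] .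
  ultimately show ?thesis by (simp add: algebra_simps)
qed simp

lemma reverse_greedy_run_potential_le:
  assumes "finite C" "metric_on C d" "1 \<le> k" "reverse_greedy_run C d k F" "i \<le> card C - k"
    and \<sigma>: "\<And>c. c \<in> C \<Longrightarrow> \<sigma> c \<in> C \<and> d c (\<sigma> c) \<le> r"
    and "card (\<sigma> ` C) \<le> k"
  shows "kcost C d (\<sigma> ` F i) + 2 * r * card (\<sigma> ` F i)
    \<le> kcost C d (\<sigma> ` F 0) + 2 * r * card (\<sigma> ` F 0)"
proof (rule lift_Suc_antimono_le_ivl[of "{..<card C - k}"])
  fix i assume "i \<in> {..<card C - k}"
  then have i: "i < card C - k" by simp
  obtain f where f: "f \<in> F i" "F (Suc i) = F i - {f}"
    and greedy: "\<And>g. g \<in> F i \<Longrightarrow> kcost C d (F i - {f}) \<le> kcost C d (F i - {g})"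
    using reverse_greedy_run_step[OF assms(4) i] by blast
  have Fi: "F i \<subseteq> C" "card (F i) = card C - i"
    using reverse_greedy_run_subset_card[OF assms(1,4)] i by simp_all
  then have "card (\<sigma> ` F i) \<le> card (\<sigma> ` C)" using assms(1) by (intro card_mono) auto
  then have collision: "card (\<sigma> ` F i) < card (F i)" using Fi(2) i assms(7) by linarith
  have "card (F (Suc i)) = card C - Suc i"
    using reverse_greedy_run_subset_card[OF assms(1,4)] i by simp
  then have "F i - {f} \<noteq> {}" using f(2) i assms(3) by force
  then show "kcost C d (\<sigma> ` F (Suc i)) + 2 * r * card (\<sigma> ` F (Suc i))
      \<le> kcost C d (\<sigma> ` F i) + 2 * r * card (\<sigma> ` F i)"
    unfolding f(2) using greedy_removal_potential_le[OF assms(1,2) Fi(1) _ \<sigma> collision greedy] by blast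
qed (use assms(5) in auto)

theorem lemma2:
  fixes C :: "'a set" and d :: "'a \<Rightarrow> 'a \<Rightarrow> real" and k :: nat and F :: "nat \<Rightarrow> 'a set"
  assumes "finite C" and "metric_on C d"
    and "1 \<le> k" and "k \<le> card C"
    and "reverse_greedy_run C d k F"
  shows "kcost C d (F (card C - k)) \<le> 2 * real k * kopt C d k"
proof -
  let ?N = "card C - k" and ?\<Phi> = "\<lambda>G. kcost C d G + 2 * kopt C d k * card G"
  have "C \<noteq> {}" using assms(3,4) by auto
  then obtain Opt where Opt: "Opt \<subseteq> C" "Opt \<noteq> {}" "card Opt \<le> k" "kcost C d Opt = kopt C d k"
    using kopt_attained assms(1,3) by blast
  obtain \<sigma> where \<sigma>Opt: "\<And>c. c \<in> C \<Longrightarrow> \<sigma> c \<in> Opt \<and> d c (\<sigma> c) \<le> kopt C d k"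
    using nearest_center_map[OF assms(1) Opt(1,2)] Opt(4) by metis
  then have \<sigma>: "\<And>c. c \<in> C \<Longrightarrow> \<sigma> c \<in> C \<and> d c (\<sigma> c) \<le> kopt C d k" using Opt(1) by blast
  have "card (\<sigma> ` C) \<le> k"
    using \<sigma>Opt Opt(3) card_mono[OF finite_subset[OF Opt(1) assms(1)], of "\<sigma> ` C"] by fastforce
  have FN: "F ?N \<subseteq> C" "card (F ?N) = k"
    using reverse_greedy_run_subset_card[OF assms(1,5)] assms(4) by auto
  then have "F ?N \<noteq> {}" "1 \<le> card (\<sigma> ` F ?N)"
    using assms(1,3) by (auto simp: Suc_le_eq card_gt_0_iff finite_subset)
  have "F 0 = C" using assms(5) unfolding reverse_greedy_run_def by simp
  obtain c where "c \<in> C" using \<open>C \<noteq> {}\<close> by blast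
  then have "0 \<le> kopt C d k" using \<sigma> assms(2) unfolding metric_on_def by (meson order_trans)
  have "kcost C d (F ?N) \<le> kcost C d (\<sigma> ` F ?N) + kopt C d k"
    using kcost_le_kcost_image_add[OF assms(1,2) FN(1) \<open>F ?N \<noteq> {}\<close> \<sigma>] .
  also have "\<dots> \<le> ?\<Phi> (\<sigma> ` C) - 2 * kopt C d k * card (\<sigma> ` F ?N) + kopt C d k"
    using reverse_greedy_run_potential_le[OF assms(1,2,3,5) order_refl \<sigma> \<open>card (\<sigma> ` C) \<le> k\<close>]
      \<open>F 0 = C\<close> by simp
  also have "\<dots> \<le> kopt C d k + 2 * kopt C d k * k - 2 * kopt C d k * 1 + kopt C d k"
    using kcost_image_le[OF assms(1) \<open>C \<noteq> {}\<close>, where \<sigma>=\<sigma> and r="kopt C d k" and d=d] \<sigma>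
      mult_left_mono[OF of_nat_mono[OF \<open>card (\<sigma> ` C) \<le> k\<close>] \<open>0 \<le> kopt C d k\<close>]
      mult_left_mono[OF of_nat_mono[OF \<open>1 \<le> card (\<sigma> ` F ?N)\<close>] \<open>0 \<le> kopt C d k\<close>]
    by simp
  also have "\<dots> = 2 * real k * kopt C d k" by (simp add: algebra_simps)
  finally show ?thesis .
qed

end
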